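(* Algorithm $R_A$ (described in the context) is group-strategyproof over the domain of all monotonic profiles (for $n$ agents and alternatives $\{A,B\}$) that admit a unique stable assignment.
   Context: Agents $V=\{v_1,\dots,v_n\}$; two alternatives $A,B$. Each agent $v_i$ has a strict total order $\succ_i$ on $\{A,B\}\times\{1,\dots,n\}$, where $(S,j)$ means being in the community adopting $S$ of size $j$; it is monotonic if $(S,j)\succ_i(S,k)$ whenever $k<j$. An assignment is a map $f:V\to\{A,B\}$; $v_i$ prefers $f$ to $g$ if $(f(v_i),|f^{-1}(f(v_i))|)\succ_i(g(v_i),|g^{-1}(g(v_i))|)$. An assignment $f$ is stable if there is no assignment $f'\neq f$ such that every agent $v_i$ with $f'(v_i)\neq f(v_i)$ prefers $f'$ to $f$. Algorithm $R_A$: set $V_A=V$, $V_B=\emptyset$, $a=|V_A|$, $b=|V_B|$. Repeat: let $k$ be the largest $j\in\{1,\dots,a\}$ with $|\{v_i\in V_A:(B,b+j)\succ_i(A,a)\}|\ge j$, or $k=0$ if none exists. If $k=0$, output $f$ with $f^{-1}(A)=V_A$, $f^{-1}(B)=V_B$. Otherwise let $X=\{v_i\in V_A:(B,b+k)\succ_i(A,a)\}$, move $X$ from $V_A$ to $V_B$, update $a,b$, and repeat. A rule $R$ is group-strategyproof over a domain $D$ of profiles if for every $V\in D$ with $f=R(V)$ there is no nonempty set $U\subseteq V$ of agents who can simultaneously replace their orders by monotonic orders, producing a profile $V'$ with $f'=R(V')$, such that every $v_i\in U$ prefers $f'$ to $f$ according to her true order $\succ_i$. *)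

theory Defs
  imports Main
begin

datatype alt = A | B

type_synonym outcome = "alt \<times> nat"

text \<open>A preference order of an agent: pref x y means x is strictly preferred to y.
  Agents are the elements of a finite type 'v; n = CARD('v).\<close>
type_synonym pref = "outcome \<Rightarrow> outcome \<Rightarrow> bool"

definition outcomes :: "nat \<Rightarrow> outcome set" where
  "outcomes n = UNIV \<times> {1..n}"

definition strict_total_order_on :: "outcome set \<Rightarrow> pref \<Rightarrow> bool" where
  "strict_total_order_on X r \<longleftrightarrow>
     (\<forall>x\<in>X. \<not> r x x) \<and>
     (\<forall>x\<in>X. \<forall>y\<in>X. \<forall>z\<in>X. r x y \<and> r y z \<longrightarrow> r x z) \<and>
     (\<forall>x\<in>X. \<forall>y\<in>X. x \<noteq> y \<longrightarrow> r x y \<or> r y x)"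

definition monotonic :: "nat \<Rightarrow> pref \<Rightarrow> bool" where
  "monotonic n r \<longleftrightarrow> (\<forall>S j k. k < j \<and> 1 \<le> k \<and> j \<le> n \<longrightarrow> r (S, j) (S, k))"

definition is_profile :: "('v::finite \<Rightarrow> pref) \<Rightarrow> bool" where
  "is_profile P \<longleftrightarrow> (\<forall>v. strict_total_order_on (outcomes (card (UNIV::'v set))) (P v))"

definition monotonic_profile :: "('v::finite \<Rightarrow> pref) \<Rightarrow> bool" where
  "monotonic_profile P \<longleftrightarrow> is_profile P \<and> (\<forall>v. monotonic (card (UNIV::'v set)) (P v))"

definition outcome_of :: "('v::finite \<Rightarrow> alt) \<Rightarrow> 'v \<Rightarrow> outcome" where
  "outcome_of f v = (f v, card {w. f w = f v})"

definition prefers :: "pref \<Rightarrow> 'v::finite \<Rightarrow> ('v \<Rightarrow> alt) \<Rightarrow> ('v \<Rightarrow> alt) \<Rightarrow> bool" where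
  "prefers r v f g \<longleftrightarrow> r (outcome_of f v) (outcome_of g v)"

definition stable :: "('v::finite \<Rightarrow> pref) \<Rightarrow> ('v \<Rightarrow> alt) \<Rightarrow> bool" where
  "stable P f \<longleftrightarrow>
     \<not> (\<exists>f'. f' \<noteq> f \<and> (\<forall>v. f' v \<noteq> f v \<longrightarrow> prefers (P v) v f' f))"

definition unique_stable :: "('v::finite \<Rightarrow> pref) \<Rightarrow> bool" where
  "unique_stable P \<longleftrightarrow> (\<exists>!f. stable P f)"

text \<open>One round of algorithm R_A, acting on the current set V_A (V_B is its complement).\<close>
definition RA_k :: "('v::finite \<Rightarrow> pref) \<Rightarrow> 'v set \<Rightarrow> nat" where
  "RA_k P VA = (let a = card VA; b = card (UNIV - VA) in
     Max ({j \<in> {1..a}. j \<le> card {v \<in> VA. P v (B, b + j) (A, a)}} \<union> {0}))"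

definition RA_step :: "('v::finite \<Rightarrow> pref) \<Rightarrow> 'v set \<Rightarrow> 'v set" where
  "RA_step P VA = (let a = card VA; b = card (UNIV - VA); k = RA_k P VA in
     if k = 0 then VA else VA - {v \<in> VA. P v (B, b + k) (A, a)})"

text \<open>Each non-terminating round removes at least one agent from V_A, so after
  CARD('v) rounds the loop has reached its fixed point (k = 0).\<close>
definition RA :: "('v::finite \<Rightarrow> pref) \<Rightarrow> ('v \<Rightarrow> alt)" where
  "RA P = (let VA = (RA_step P ^^ card (UNIV::'v set)) UNIV in (\<lambda>v. if v \<in> VA then A else B))"

definition group_strategyproof_on ::
  "(('v::finite \<Rightarrow> pref) \<Rightarrow> ('v \<Rightarrow> alt)) \<Rightarrow> ('v \<Rightarrow> pref) set \<Rightarrow> bool" where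
  "group_strategyproof_on R D \<longleftrightarrow>
     (\<forall>P\<in>D. \<not> (\<exists>U P'. U \<noteq> {} \<and>
        (\<forall>v. v \<notin> U \<longrightarrow> P' v = P v) \<and>
        (\<forall>v\<in>U. strict_total_order_on (outcomes (card (UNIV::'v set))) (P' v) \<and> monotonic (card (UNIV::'v set)) (P' v)) \<and>
        (\<forall>v\<in>U. prefers (P v) v (R P') (R P))))"

end

(*
  Call S A-side stable if no nonempty group of agents in S would all gain by jointly switching
  to B, and B-side stable if no nonempty group outside S would all gain by jointly switching to A.
  Under monotonic orders the two conditions make the assignment with A-community S stable.
  R_A stops exactly at an A-side stable set, preserves B-side stability, and never removes an
  A-side stable subset, so its output V is stable and is the largest A-side stable set.

  Suppose a coalition U misreports, every member gains, and W is the new output. Members of U in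
  W - V strictly prefer (A, |W|) to (B, n - |V|); with monotonicity this makes V \<union> W A-side
  stable for the true profile, so W \<subseteq> V. A member of U in W would then be in an A-community no
  larger than before, contradicting monotonicity, so U misses W. Hence W is A-side and B-side
  stable for the true profile as well, uniqueness of the stable assignment gives W = V, and
  nobody has gained.
*)

theory Submission
  imports Defs "HOL-Library.Cardinality"
begin

definition monotonic_order :: "nat \<Rightarrow> pref \<Rightarrow> bool" where
  "monotonic_order N r \<longleftrightarrow> strict_total_order_on (outcomes N) r \<and> monotonic N r"

lemma monotonic_profile_iff:
  "monotonic_profile (P :: 'v::finite \<Rightarrow> pref) \<longleftrightarrow> (\<forall>v. monotonic_order CARD('v) (P v))"
  unfolding monotonic_profile_def is_profile_def monotonic_order_def by blast

lemma monotonic_order_irrefl: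
  assumes "monotonic_order N r" "1 \<le> x" "x \<le> N"
  shows "\<not> r (S, x) (S, x)"
  using assms unfolding monotonic_order_def strict_total_order_on_def outcomes_def by auto

lemma monotonic_order_trans:
  assumes "monotonic_order N r" "r x y" "r y z"
    and "x \<in> outcomes N" "y \<in> outcomes N" "z \<in> outcomes N"
  shows "r x z"
  using assms unfolding monotonic_order_def strict_total_order_on_def by blast

lemma monotonic_order_mono:
  assumes r: "monotonic_order N r" and pref: "r (S, y) (T, j)"
    and "1 \<le> y" "y \<le> x" "x \<le> N" "1 \<le> i" "i \<le> j" "j \<le> N"
  shows "r (S, x) (T, i)"
proof -
  have up: "x = y \<or> r (S, x) (S, y)" and down: "i = j \<or> r (T, j) (T, i)"
    using r assms unfolding monotonic_order_def monotonic_def by (auto simp: le_less)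
  have "(S, x) \<in> outcomes N" "(S, y) \<in> outcomes N" "(T, i) \<in> outcomes N" "(T, j) \<in> outcomes N"
    using assms by (auto simp: outcomes_def)
  then show ?thesis
    using up down pref monotonic_order_trans[OF r] by metis
qed

lemma monotonic_order_no_cycle:
  assumes r: "monotonic_order N r" and "r (S, p) (T, s)" "r (T, w) (S, q)"
    and "1 \<le> p" "p \<le> q" "q \<le> N" "1 \<le> w" "w \<le> s" "s \<le> N"
  shows False
proof -
  have "r (S, q) (T, w)"
    using monotonic_order_mono[OF r] assms by auto
  then have "r (S, q) (S, q)"
    using monotonic_order_trans[OF r _ \<open>r (T, w) (S, q)\<close>] assms by (auto simp: outcomes_def)
  then show False
    using monotonic_order_irrefl[OF r] assms by auto
qed

lemma outcome_of_in_outcomes: "outcome_of f (v::'v::finite) \<in> outcomes CARD('v)"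
proof -
  have "{w. f w = f v} \<noteq> {}"
    by auto
  then show ?thesis
    unfolding outcome_of_def outcomes_def by (simp add: Suc_le_eq card_gt_0_iff card_mono)
qed

lemma not_prefers_self:
  assumes "monotonic_order CARD('v) r"
  shows "\<not> prefers r (v::'v::finite) f f"
  using assms outcome_of_in_outcomes[of f v]
  unfolding prefers_def monotonic_order_def strict_total_order_on_def by blast

lemma card_Compl: "card (- S) = CARD('v) - card (S :: 'v::finite set)"
  by (metis Compl_eq_Diff_UNIV card_Diff_subset finite subset_UNIV)

lemma card_le_CARD: "card (S :: 'v::finite set) \<le> CARD('v)"
  by (simp add: card_mono)

definition adopt_A :: "'v set \<Rightarrow> 'v \<Rightarrow> alt" where
  "adopt_A S = (\<lambda>v. if v \<in> S then A else B)"

lemma outcome_of_adopt_A: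
  "outcome_of (adopt_A S) (v::'v::finite) =
     (if v \<in> S then (A, card S) else (B, CARD('v) - card S))"
proof -
  have "{w. adopt_A S w = A} = S" "{w. adopt_A S w = B} = - S"
    unfolding adopt_A_def by auto
  then show ?thesis
    unfolding outcome_of_def by (simp add: adopt_A_def card_Compl)
qed

definition A_side_stable :: "('v::finite \<Rightarrow> pref) \<Rightarrow> 'v set \<Rightarrow> bool" where
  "A_side_stable P S \<longleftrightarrow> (\<forall>Z \<subseteq> S. Z \<noteq> {} \<longrightarrow>
     (\<exists>v\<in>Z. \<not> P v (B, CARD('v) - card S + card Z) (A, card S)))"

definition B_side_stable :: "('v::finite \<Rightarrow> pref) \<Rightarrow> 'v set \<Rightarrow> bool" where
  "B_side_stable P S \<longleftrightarrow> (\<forall>Y \<subseteq> - S. Y \<noteq> {} \<longrightarrow>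
     (\<exists>v\<in>Y. \<not> P v (A, card S + card Y) (B, CARD('v) - card S)))"

lemma A_side_stable_cong:
  "(\<And>v. v \<in> S \<Longrightarrow> P' v = P v) \<Longrightarrow> A_side_stable P' S \<longleftrightarrow> A_side_stable P S"
  unfolding A_side_stable_def by (metis subsetD)

lemma A_side_stable_no_joint_move:
  fixes P :: "'v::finite \<Rightarrow> pref"
  assumes stab: "A_side_stable P S" and mono: "\<forall>v. monotonic_order CARD('v) (P v)"
    and X: "X \<subseteq> S" "X \<noteq> {}" and gain: "\<forall>v\<in>X. P v (B, m) (A, a)"
    and m: "1 \<le> m" "m \<le> CARD('v) - card S + card X"
    and a: "card S \<le> a" "a \<le> CARD('v)"
  shows False
proof -
  have "1 \<le> card X" "card X \<le> card S"
    using X by (auto simp: Suc_le_eq card_gt_0_iff card_mono)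
  \<comment> \<open>Z is nonempty, and by monotonicity its joint move is at least as good as (B, m).\<close>
  obtain Z where Z: "Z \<subseteq> X" "card Z = max 1 (m - (CARD('v) - card S))"
    using obtain_subset_with_card_n[of "max 1 (m - (CARD('v) - card S))" X]
      m \<open>1 \<le> card X\<close> by (metis max.bounded_iff le_diff_conv add.commute)
  have "card Z \<le> card S" "1 \<le> card Z" "Z \<subseteq> S"
    using Z X \<open>card X \<le> card S\<close> card_mono[of X Z] by auto
  have Z_ne: "Z \<noteq> {}"
    using \<open>1 \<le> card Z\<close> by auto
  obtain v where v: "v \<in> Z" "\<not> P v (B, CARD('v) - card S + card Z) (A, card S)"
    using stab Z_ne \<open>Z \<subseteq> S\<close> unfolding A_side_stable_def by blast
  have "P v (B, m) (A, a)"
    using gain v(1) Z(1) by blast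
  then have "P v (B, CARD('v) - card S + card Z) (A, card S)"
    by (rule monotonic_order_mono[OF mono[rule_format]])
      (use m a Z(2) \<open>1 \<le> card X\<close> \<open>card Z \<le> card S\<close> in linarith)+
  then show False
    using v(2) by contradiction
qed

lemma B_side_stable_no_joint_move:
  fixes P :: "'v::finite \<Rightarrow> pref"
  assumes stab: "B_side_stable P S" and mono: "\<forall>v. monotonic_order CARD('v) (P v)"
    and Y: "Y \<subseteq> - S" "Y \<noteq> {}" and gain: "\<forall>v\<in>Y. P v (A, m) (B, b)"
    and m: "1 \<le> m" "m \<le> card S + card Y"
    and b: "CARD('v) - card S \<le> b" "b \<le> CARD('v)"
  shows False
proof -
  have "1 \<le> card Y" "card Y \<le> CARD('v) - card S"
    using Y card_mono[of "- S" Y] by (auto simp: Suc_le_eq card_gt_0_iff card_Compl)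
  obtain Z where Z: "Z \<subseteq> Y" "card Z = max 1 (m - card S)"
    using obtain_subset_with_card_n[of "max 1 (m - card S)" Y]
      m \<open>1 \<le> card Y\<close> by (metis max.bounded_iff le_diff_conv add.commute)
  have "card Z \<le> card Y" "1 \<le> card Z" "Z \<subseteq> - S"
    using Z Y card_mono[of Y Z] by auto
  have Z_ne: "Z \<noteq> {}"
    using \<open>1 \<le> card Z\<close> by auto
  obtain v where v: "v \<in> Z" "\<not> P v (A, card S + card Z) (B, CARD('v) - card S)"
    using stab Z_ne \<open>Z \<subseteq> - S\<close> unfolding B_side_stable_def by blast
  have "P v (A, m) (B, b)"
    using gain v(1) Z(1) by blast
  then have "P v (A, card S + card Z) (B, CARD('v) - card S)"
    by (rule monotonic_order_mono[OF mono[rule_format]])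
      (use m b Z(2) \<open>1 \<le> card Y\<close> \<open>card Y \<le> CARD('v) - card S\<close> \<open>card Z \<le> card Y\<close> in linarith)+
  then show False
    using v(2) by contradiction
qed

lemma card_adopters_after_switch:
  fixes f :: "'v::finite \<Rightarrow> alt"
  shows "card {v. f v = A} = card S - card {v \<in> S. f v = B} + card {v \<in> - S. f v = A}"
proof -
  have "{v. f v = A} = (S - {v \<in> S. f v = B}) \<union> {v \<in> - S. f v = A}"
    by (auto intro: alt.exhaust)
  then have "card {v. f v = A} = card (S - {v \<in> S. f v = B}) + card {v \<in> - S. f v = A}"
    by (simp add: card_Un_disjoint disjoint_iff)
  then show ?thesis
    by (simp add: card_Diff_subset)
qed

lemma stable_adopt_A:
  fixes P :: "'v::finite \<Rightarrow> pref"
  assumes mono: "\<forall>v. monotonic_order CARD('v) (P v)"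
    and A_stab: "A_side_stable P S" and B_stab: "B_side_stable P S"
  shows "stable P (adopt_A S)"
  unfolding stable_def
proof (rule notI, elim exE conjE)
  fix f
  assume changed: "f \<noteq> adopt_A S"
    and gain: "\<forall>v. f v \<noteq> adopt_A S v \<longrightarrow> prefers (P v) v f (adopt_A S)"
  define XA where "XA = {v \<in> S. f v = B}"
  define XB where "XB = {v \<in> - S. f v = A}"
  define a where "a = card {v. f v = A}"
  have a: "a = card S - card XA + card XB"
    unfolding a_def XA_def XB_def by (rule card_adopters_after_switch)
  have "{v. f v = B} = - {v. f v = A}"
    by (auto intro: alt.exhaust)
  then have b: "card {v. f v = B} = CARD('v) - a"
    unfolding a_def by (simp add: card_Compl)
  have "card XA \<le> card S" "card XB \<le> CARD('v) - card S"
    using card_mono[of S XA] card_mono[of "- S" XB] by (auto simp: XA_def XB_def card_Compl)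
  have gain_A: "\<forall>v\<in>XA. P v (B, CARD('v) - a) (A, card S)"
  proof
    fix v
    assume "v \<in> XA"
    with gain[rule_format, of v] b show "P v (B, CARD('v) - a) (A, card S)"
      unfolding XA_def prefers_def outcome_of_adopt_A by (auto simp: adopt_A_def outcome_of_def)
  qed
  have gain_B: "\<forall>v\<in>XB. P v (A, a) (B, CARD('v) - card S)"
  proof
    fix v
    assume "v \<in> XB"
    with gain[rule_format, of v] show "P v (A, a) (B, CARD('v) - card S)"
      unfolding XB_def a_def prefers_def outcome_of_adopt_A by (auto simp: adopt_A_def outcome_of_def)
  qed
  consider "XA \<noteq> {}" "card XB \<le> card XA" | "XB \<noteq> {}" "card XA \<le> card XB" | "XA = {}" "XB = {}"
    by (metis card.empty le_zero_eq nat_le_linear)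
  then show False
  proof cases
    case 1
    then have "1 \<le> card XA"
      by (simp add: Suc_le_eq card_gt_0_iff)
    then have "1 \<le> CARD('v) - a" and "CARD('v) - a \<le> CARD('v) - card S + card XA"
      using 1(2) a card_le_CARD[of S] \<open>card XA \<le> card S\<close> \<open>card XB \<le> CARD('v) - card S\<close>
      by linarith+
    moreover have "XA \<subseteq> S"
      unfolding XA_def by blast
    ultimately show False
      using A_side_stable_no_joint_move[OF A_stab mono _ 1(1) gain_A] card_le_CARD[of S] by simp
  next
    case 2
    then have "1 \<le> card XB"
      by (simp add: Suc_le_eq card_gt_0_iff)
    then have "1 \<le> a" and "a \<le> card S + card XB"
      using 2(2) a \<open>card XA \<le> card S\<close> by linarith+
    moreover have "XB \<subseteq> - S"
      unfolding XB_def by blast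
    ultimately show False
      using B_side_stable_no_joint_move[OF B_stab mono _ 2(1) gain_B] by simp
  next
    case 3
    then have "f = adopt_A S"
      unfolding XA_def XB_def adopt_A_def by (fastforce intro: alt.exhaust)
    then show False
      using changed by contradiction
  qed
qed

lemma deflationary_funpow_CARD_fixpoint:
  fixes f :: "'a::finite set \<Rightarrow> 'a set"
  assumes deflationary: "\<And>S. f S \<subseteq> S"
  shows "f ((f ^^ CARD('a)) UNIV) = (f ^^ CARD('a)) UNIV"
proof -
  have "f ((f ^^ i) UNIV) = (f ^^ i) UNIV \<or> card ((f ^^ i) UNIV) + i \<le> CARD('a)" for i
  proof (induction i)
    case 0
    then show ?case
      by simp
  next
    case (Suc i)
    show ?case
    proof (cases "f ((f ^^ i) UNIV) = (f ^^ i) UNIV")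
      case True
      then show ?thesis
        by simp
    next
      case False
      then have "card ((f ^^ Suc i) UNIV) < card ((f ^^ i) UNIV)"
        using deflationary by (simp add: psubset_card_mono psubsetI)
      then show ?thesis
        using Suc.IH False by simp
    qed
  qed
  from this[of "CARD('a)"] show ?thesis
    using deflationary by auto
qed

definition RA_movers :: "('v::finite \<Rightarrow> pref) \<Rightarrow> 'v set \<Rightarrow> nat \<Rightarrow> 'v set" where
  "RA_movers P S k = {v \<in> S. P v (B, CARD('v) - card S + k) (A, card S)}"

lemma RA_k_eq: "RA_k P S = Max ({j \<in> {1..card S}. j \<le> card (RA_movers P S j)} \<union> {0})"
  unfolding RA_k_def RA_movers_def Let_def by (simp add: card_Diff_subset)

lemma RA_step_eq: "RA_step P S = (if RA_k P S = 0 then S else S - RA_movers P S (RA_k P S))"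
  unfolding RA_step_def RA_movers_def Let_def by (simp add: card_Diff_subset)

lemma RA_k_nonzero:
  assumes "RA_k P S \<noteq> 0"
  shows "1 \<le> RA_k P S" "RA_k P S \<le> card (RA_movers P S (RA_k P S))"
proof -
  have "RA_k P S \<in> {j \<in> {1..card S}. j \<le> card (RA_movers P S j)} \<union> {0}"
    unfolding RA_k_eq by (rule Max_in) auto
  then show "1 \<le> RA_k P S" "RA_k P S \<le> card (RA_movers P S (RA_k P S))"
    using assms by auto
qed

lemma le_RA_k:
  assumes "1 \<le> j" "j \<le> card S" "j \<le> card (RA_movers P S j)"
  shows "j \<le> RA_k P S"
  unfolding RA_k_eq using assms by (intro Max_ge) auto

lemma A_side_stable_if_RA_k_eq_0:
  fixes P :: "'v::finite \<Rightarrow> pref"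
  assumes "RA_k P S = 0"
  shows "A_side_stable P S"
  unfolding A_side_stable_def
proof (intro allI impI, rule ccontr)
  fix Z
  assume Z: "Z \<subseteq> S" "Z \<noteq> {}"
    and "\<not> (\<exists>v\<in>Z. \<not> P v (B, CARD('v) - card S + card Z) (A, card S))"
  then have "Z \<subseteq> RA_movers P S (card Z)"
    unfolding RA_movers_def by auto
  then have "card Z \<le> RA_k P S"
    using Z by (intro le_RA_k) (auto simp: Suc_le_eq card_gt_0_iff card_mono)
  then show False
    using assms Z by simp
qed

lemma RA_step_subset: "RA_step P S \<subseteq> S"
  unfolding RA_step_eq by auto

lemma RA_step_psubset:
  assumes "RA_k P S \<noteq> 0"
  shows "RA_step P S \<subset> S"
proof -
  have "RA_movers P S (RA_k P S) \<noteq> {}"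
    using RA_k_nonzero[OF assms] by auto
  then show ?thesis
    using assms unfolding RA_step_eq RA_movers_def by auto
qed

definition RA_set :: "('v::finite \<Rightarrow> pref) \<Rightarrow> 'v set" where
  "RA_set P = (RA_step P ^^ CARD('v)) UNIV"

lemma RA_eq_adopt_A: "RA P = adopt_A (RA_set P)"
  unfolding RA_def RA_set_def adopt_A_def Let_def ..

lemma RA_k_RA_set: "RA_k P (RA_set P) = 0"
  using RA_step_psubset deflationary_funpow_CARD_fixpoint[of "RA_step P", OF RA_step_subset]
  unfolding RA_set_def by blast

lemma A_side_stable_RA_set: "A_side_stable P (RA_set P)"
  using A_side_stable_if_RA_k_eq_0[OF RA_k_RA_set] .

lemma B_side_stable_RA_step:
  fixes P :: "'v::finite \<Rightarrow> pref"
  assumes mono: "\<forall>v. monotonic_order CARD('v) (P v)" and stab: "B_side_stable P S"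
  shows "B_side_stable P (RA_step P S)"
proof (cases "RA_k P S = 0")
  case True
  then show ?thesis
    using stab by (simp add: RA_step_eq)
next
  case False
  define k where "k = RA_k P S"
  define X where "X = RA_movers P S k"
  have k: "1 \<le> k" "k \<le> card X"
    using RA_k_nonzero[OF False] unfolding k_def X_def by auto
  have "X \<subseteq> S"
    unfolding X_def RA_movers_def by auto
  then have card_X: "card X \<le> card S" "card (S - X) = card S - card X"
    by (auto simp: card_mono card_Diff_subset)
  have step: "RA_step P S = S - X"
    using False unfolding RA_step_eq X_def k_def by simp
  show ?thesis
    unfolding B_side_stable_def step
  proof (intro allI impI, rule ccontr)
    fix Y
    assume Y: "Y \<subseteq> - (S - X)" "Y \<noteq> {}"
      and "\<not> (\<exists>v\<in>Y. \<not> P v (A, card (S - X) + card Y) (B, CARD('v) - card (S - X)))"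
    then have gain: "\<forall>v\<in>Y. P v (A, card S - card X + card Y) (B, CARD('v) - card S + card X)"
      using card_X card_le_CARD[of S] by auto
    have "1 \<le> card Y"
      using Y by (simp add: Suc_le_eq card_gt_0_iff)
    show False
    proof (cases "Y - X = {}")
      case False
      have card_Y: "card Y \<le> card (Y - X) + card X"
        using card_Un_le[of "Y - X" X] card_mono[of "Y - X \<union> X" Y] by auto
      have "Y - X \<subseteq> - S" "\<forall>v\<in>Y - X. P v (A, card S - card X + card Y) (B, CARD('v) - card S + card X)"
        using Y gain by auto
      then show False
        by (rule B_side_stable_no_joint_move[OF stab mono _ False])
          (use card_Y card_X \<open>1 \<le> card Y\<close> card_le_CARD[of S] in linarith)+
    next
      case True
      then obtain v where "v \<in> Y" "v \<in> X"
        using Y by blast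
      then have to_B: "P v (B, CARD('v) - card S + k) (A, card S)"
        and to_A: "P v (A, card S - card X + card Y) (B, CARD('v) - card S + card X)"
        using gain unfolding X_def RA_movers_def by auto
      have "card Y \<le> card X"
        using True by (simp add: card_mono)
      then show False
        by (intro monotonic_order_no_cycle[OF mono[rule_format] to_B to_A])
          (use k card_X \<open>1 \<le> card Y\<close> card_le_CARD[of S] in linarith)+
    qed
  qed
qed

lemma subset_RA_step:
  fixes P :: "'v::finite \<Rightarrow> pref"
  assumes mono: "\<forall>v. monotonic_order CARD('v) (P v)"
    and stab: "A_side_stable P H" and "H \<subseteq> S"
  shows "H \<subseteq> RA_step P S"
proof (cases "RA_k P S = 0")
  case True
  then show ?thesis
    using \<open>H \<subseteq> S\<close> by (simp add: RA_step_eq)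
next
  case False
  define k where "k = RA_k P S"
  define X where "X = RA_movers P S k"
  have k: "1 \<le> k" "k \<le> card X"
    using RA_k_nonzero[OF False] unfolding k_def X_def by auto
  have "X \<subseteq> S"
    unfolding X_def RA_movers_def by auto
  show ?thesis
  proof (rule ccontr)
    assume "\<not> H \<subseteq> RA_step P S"
    then have "H \<inter> X \<noteq> {}"
      using \<open>H \<subseteq> S\<close> False unfolding RA_step_eq X_def k_def by auto
    have "card H - card (H \<inter> X) = card (H - X)"
      by (simp add: card_Diff_subset_Int)
    also have "\<dots> \<le> card (S - X)"
      using \<open>H \<subseteq> S\<close> by (intro card_mono) auto
    also have "\<dots> = card S - card X"
      using \<open>X \<subseteq> S\<close> by (simp add: card_Diff_subset)
    finally have card_H: "card H - card (H \<inter> X) \<le> card S - card X" .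
    have card_le: "card (H \<inter> X) \<le> card H" "card H \<le> card S" "card X \<le> card S"
      using \<open>H \<subseteq> S\<close> \<open>X \<subseteq> S\<close> by (auto simp: card_mono)
    have "\<forall>v\<in>H \<inter> X. P v (B, CARD('v) - card S + k) (A, card S)"
      unfolding X_def RA_movers_def by auto
    with \<open>H \<inter> X \<noteq> {}\<close> show False
      by (rule A_side_stable_no_joint_move[OF stab mono Int_lower1])
        (use k card_H card_le card_le_CARD[of S] in linarith)+
  qed
qed

lemma RA_iterate_invariant:
  fixes P :: "'v::finite \<Rightarrow> pref"
  assumes mono: "\<forall>v. monotonic_order CARD('v) (P v)"
  shows "B_side_stable P ((RA_step P ^^ i) UNIV) \<and> (\<forall>H. A_side_stable P H \<longrightarrow> H \<subseteq> (RA_step P ^^ i) UNIV)"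
proof (induction i)
  case 0
  then show ?case
    by (simp add: B_side_stable_def)
next
  case (Suc i)
  then show ?case
    using B_side_stable_RA_step[OF mono] subset_RA_step[OF mono] by simp
qed

lemma B_side_stable_RA_set:
  fixes P :: "'v::finite \<Rightarrow> pref"
  assumes "\<forall>v. monotonic_order CARD('v) (P v)"
  shows "B_side_stable P (RA_set P)"
  using RA_iterate_invariant[OF assms] unfolding RA_set_def by blast

lemma A_side_stable_subset_RA_set:
  fixes P :: "'v::finite \<Rightarrow> pref"
  assumes "\<forall>v. monotonic_order CARD('v) (P v)" and "A_side_stable P H"
  shows "H \<subseteq> RA_set P"
  using RA_iterate_invariant[OF assms(1)] assms(2) unfolding RA_set_def by blast

lemma stable_RA:
  fixes P :: "'v::finite \<Rightarrow> pref"
  assumes "\<forall>v. monotonic_order CARD('v) (P v)"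
  shows "stable P (RA P)"
  unfolding RA_eq_adopt_A
  using stable_adopt_A[OF assms A_side_stable_RA_set B_side_stable_RA_set[OF assms]] .

lemma A_side_stable_Un_deviation:
  fixes P P' :: "'v::finite \<Rightarrow> pref"
  assumes mono: "\<forall>v. monotonic_order CARD('v) (P v)"
    and mono': "\<forall>v. monotonic_order CARD('v) (P' v)"
    and V: "A_side_stable P V" and W: "A_side_stable P' W"
    and agree: "\<forall>v. v \<notin> U \<longrightarrow> P' v = P v"
    and gain: "\<forall>u\<in>U \<inter> (W - V). P u (A, card W) (B, CARD('v) - card V)"
  shows "A_side_stable P (V \<union> W)"
  unfolding A_side_stable_def
proof (intro allI impI, rule ccontr)
  fix Z
  assume Z: "Z \<subseteq> V \<union> W" "Z \<noteq> {}"
    and "\<not> (\<exists>v\<in>Z. \<not> P v (B, CARD('v) - card (V \<union> W) + card Z) (A, card (V \<union> W)))"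
  then have to_B: "\<forall>v\<in>Z. P v (B, CARD('v) - card (V \<union> W) + card Z) (A, card (V \<union> W))"
    by blast
  have card_Un: "card (V \<union> W) = card V + card (W - V)"
    using card_Un_disjoint[of V "W - V"] by simp
  have card_Z: "card Z = card (Z \<inter> V) + card (Z - V)" "1 \<le> card Z"
    using card_Int_Diff[of Z V] Z(2) by (auto simp: Suc_le_eq card_gt_0_iff)
  have card_le: "card (Z - V) \<le> card (W - V)" "card W \<le> card (V \<union> W)" "card (V \<union> W) \<le> CARD('v)"
    using Z(1) by (auto intro: card_mono)
  consider "Z \<inter> V \<noteq> {}" | "Z \<subseteq> W - V" "Z \<inter> U \<noteq> {}" | "Z \<subseteq> W - V" "Z \<inter> U = {}"
    using Z(1) by blast
  then show False
  proof cases
    case 1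
    moreover have "\<forall>v\<in>Z \<inter> V. P v (B, CARD('v) - card (V \<union> W) + card Z) (A, card (V \<union> W))"
      using to_B by blast
    ultimately show False
      by (rule A_side_stable_no_joint_move[OF V mono Int_lower2])
        (use card_Un card_Z card_le in linarith)+
  next
    case 2
    then obtain u where "u \<in> Z" "u \<in> U" "u \<in> W - V"
      by blast
    then have "1 \<le> card W"
      by (auto simp: Suc_le_eq card_gt_0_iff)
    moreover have "card Z \<le> card (W - V)"
      using 2(1) by (intro card_mono) auto
    ultimately show False
      by (intro monotonic_order_no_cycle[OF mono[rule_format] to_B[rule_format, OF \<open>u \<in> Z\<close>]
            gain[rule_format, OF IntI[OF \<open>u \<in> U\<close> \<open>u \<in> W - V\<close>]]])
        (use card_Un card_Z card_le in linarith)+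
  next
    case 3
    then have "\<forall>v\<in>Z. P' v (B, CARD('v) - card (V \<union> W) + card Z) (A, card (V \<union> W))"
      using to_B agree by auto
    with Z(2) show False
      by (rule A_side_stable_no_joint_move[OF W mono' order.trans[OF 3(1) Diff_subset]])
        (use card_Un card_Z card_le in linarith)+
  qed
qed

lemma B_side_stable_deviation:
  fixes P P' :: "'v::finite \<Rightarrow> pref"
  assumes mono: "\<forall>v. monotonic_order CARD('v) (P v)"
    and mono': "\<forall>v. monotonic_order CARD('v) (P' v)"
    and V: "B_side_stable P V" and W: "B_side_stable P' W" and "W \<subseteq> V"
    and agree: "\<forall>v. v \<notin> U \<longrightarrow> P' v = P v"
    and gain: "\<forall>u\<in>U \<inter> (V - W). P u (B, CARD('v) - card W) (A, card V)"
  shows "B_side_stable P W"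
  unfolding B_side_stable_def
proof (intro allI impI, rule ccontr)
  fix Y
  assume Y: "Y \<subseteq> - W" "Y \<noteq> {}"
    and "\<not> (\<exists>v\<in>Y. \<not> P v (A, card W + card Y) (B, CARD('v) - card W))"
  then have to_A: "\<forall>v\<in>Y. P v (A, card W + card Y) (B, CARD('v) - card W)"
    by blast
  have card_V: "card V = card W + card (V - W)"
    using \<open>W \<subseteq> V\<close> card_Un_disjoint[of W "V - W"] by (simp add: Un_absorb1)
  have card_Y: "card Y = card (Y \<inter> V) + card (Y - V)" "1 \<le> card Y"
    using card_Int_Diff[of Y V] Y(2) by (auto simp: Suc_le_eq card_gt_0_iff)
  have card_le: "card (Y \<inter> V) \<le> card (V - W)" "card V \<le> CARD('v)"
    using Y(1) by (auto intro: card_mono)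
  consider "Y - V \<noteq> {}" | "Y \<subseteq> V - W" "Y \<inter> U \<noteq> {}" | "Y \<inter> U = {}"
    using Y(1) by blast
  then show False
  proof cases
    case 1
    have sub: "Y - V \<subseteq> - V" and gain_YV: "\<forall>v\<in>Y - V. P v (A, card W + card Y) (B, CARD('v) - card W)"
      using to_A by blast+
    from sub 1 gain_YV show False
      by (rule B_side_stable_no_joint_move[OF V mono])
        (use card_V card_Y card_le in linarith)+
  next
    case 2
    then obtain u where "u \<in> Y" "u \<in> U" "u \<in> V - W"
      by blast
    then have "card W < CARD('v)"
      by (intro psubset_card_mono) auto
    moreover have "card Y \<le> card (V - W)"
      using 2(1) by (intro card_mono) auto
    ultimately show False
      by (intro monotonic_order_no_cycle[OF mono[rule_format]
            gain[rule_format, OF IntI[OF \<open>u \<in> U\<close> \<open>u \<in> V - W\<close>]] to_A[rule_format, OF \<open>u \<in> Y\<close>]])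
        (use card_V card_Y card_le in linarith)+
  next
    case 3
    then have "\<forall>v\<in>Y. P' v (A, card W + card Y) (B, CARD('v) - card W)"
      using to_A agree by auto
    with Y(2) show False
      by (rule B_side_stable_no_joint_move[OF W mono' Y(1)])
        (use card_Y card_le_CARD[of W] in linarith)+
  qed
qed

lemma stable_RA_after_deviation:
  fixes P P' :: "'v::finite \<Rightarrow> pref"
  assumes mono: "\<forall>v. monotonic_order CARD('v) (P v)"
    and mono': "\<forall>v. monotonic_order CARD('v) (P' v)"
    and agree: "\<forall>v. v \<notin> U \<longrightarrow> P' v = P v"
    and gain: "\<forall>u\<in>U. prefers (P u) u (RA P') (RA P)"
  shows "stable P (RA P')"
proof -
  define V where "V = RA_set P"
  define W where "W = RA_set P'"
  have gain_VW: "\<forall>u\<in>U. P u (if u \<in> W then (A, card W) else (B, CARD('v) - card W))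
                   (if u \<in> V then (A, card V) else (B, CARD('v) - card V))"
    using gain unfolding RA_eq_adopt_A prefers_def outcome_of_adopt_A V_def W_def by auto
  have stable_sides: "A_side_stable P V" "A_side_stable P' W" "B_side_stable P V" "B_side_stable P' W"
    unfolding V_def W_def using A_side_stable_RA_set B_side_stable_RA_set mono mono' by blast+
  have "\<forall>u\<in>U \<inter> (W - V). P u (A, card W) (B, CARD('v) - card V)"
    using gain_VW by auto
  then have "A_side_stable P (V \<union> W)"
    by (rule A_side_stable_Un_deviation[OF mono mono' stable_sides(1,2) agree])
  then have "W \<subseteq> V"
    using A_side_stable_subset_RA_set[OF mono] unfolding V_def by blast
  have "U \<inter> W = {}"
  proof (rule ccontr)
    assume "U \<inter> W \<noteq> {}"
    then obtain u where "u \<in> U" "u \<in> W"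
      by blast
    then have "P u (A, card W) (A, card V)"
      using gain_VW[rule_format, OF \<open>u \<in> U\<close>] \<open>W \<subseteq> V\<close> by auto
    moreover have "1 \<le> card W" "card W \<le> card V"
      using \<open>u \<in> W\<close> \<open>W \<subseteq> V\<close> by (auto simp: Suc_le_eq card_gt_0_iff card_mono)
    ultimately show False
      using monotonic_order_no_cycle[OF mono[rule_format]] card_le_CARD[of V] by blast
  qed
  then have A_stable_W: "A_side_stable P W"
    using A_side_stable_cong[of W P' P] agree stable_sides(2) by blast
  have "\<forall>u\<in>U \<inter> (V - W). P u (B, CARD('v) - card W) (A, card V)"
    using gain_VW by auto
  then have B_stable_W: "B_side_stable P W"
    by (rule B_side_stable_deviation[OF mono mono' stable_sides(3,4) \<open>W \<subseteq> V\<close> agree])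
  show ?thesis
    unfolding RA_eq_adopt_A W_def[symmetric] by (rule stable_adopt_A[OF mono A_stable_W B_stable_W])
qed

theorem theorem4:
  shows "group_strategyproof_on (RA :: ('v::finite \<Rightarrow> pref) \<Rightarrow> ('v \<Rightarrow> alt))
           {P. monotonic_profile P \<and> unique_stable P}"
  unfolding group_strategyproof_on_def
proof (intro ballI notI, elim exE conjE)
  fix P :: "'v \<Rightarrow> pref" and U P'
  assume P: "P \<in> {P. monotonic_profile P \<and> unique_stable P}" and "U \<noteq> {}"
    and agree: "\<forall>v. v \<notin> U \<longrightarrow> P' v = P v"
    and orders: "\<forall>v\<in>U. strict_total_order_on (outcomes (card (UNIV::'v set))) (P' v) \<and>
                       monotonic (card (UNIV::'v set)) (P' v)"
    and gain: "\<forall>v\<in>U. prefers (P v) v (RA P') (RA P)"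
  have mono: "\<forall>v. monotonic_order CARD('v) (P v)"
    using P monotonic_profile_iff by blast
  moreover have mono': "\<forall>v. monotonic_order CARD('v) (P' v)"
    using mono orders agree unfolding monotonic_order_def by metis
  ultimately have "stable P (RA P')" "stable P (RA P)"
    using stable_RA_after_deviation[OF mono mono' agree gain] stable_RA by blast+
  then have "RA P' = RA P"
    using P unfolding unique_stable_def by blast
  moreover obtain u where "u \<in> U"
    using \<open>U \<noteq> {}\<close> by blast
  ultimately show False
    using gain mono not_prefers_self by metis
qed

end
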